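(* Let $Q$ be a binary symmetric $m\times m$ matrix of rank $r$ over $\mathbb{F}_2$, let $b\in\mathbb{F}_2^m$, and let $$S=\sum_{x\in\mathbb{F}_2^m} i^{\,xQx^\top+2bx^\top}.$$ Then there exists $z_1\in\mathbb{F}_2^m$ with $z_1Q=d_Q$ (over $\mathbb{F}_2$), and either $S=0$ or $$S^2=i^{\,z_1Qz_1^\top+2bz_1^\top}\,2^{2m-r}.$$
   Context: Here $i=\sqrt{-1}$, $d_Q$ denotes the main diagonal of $Q$ as a binary vector, and exponents of $i$ are computed in the integers modulo 4, viewing binary entries as the integers 0 and 1. *)

theory Defs
  imports Complex_Main "HOL-Library.Z2" "Jordan_Normal_Form.DL_Rank"
begin

definition bint :: "bit \<Rightarrow> int" where
  "bint b = (if b = 1 then 1 else 0)"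

definition rank2 :: "nat \<Rightarrow> bit mat \<Rightarrow> nat" where
  "rank2 m Q = vec_space.rank m (Q :: bit mat)"

definition diag_vec :: "bit mat \<Rightarrow> bit vec" where
  "diag_vec Q = vec (dim_row Q) (\<lambda>j. Q $$ (j, j))"

text \<open>x Q y^T computed in the integers (entries viewed as 0/1).\<close>
definition qform_int :: "nat \<Rightarrow> bit mat \<Rightarrow> bit vec \<Rightarrow> bit vec \<Rightarrow> int" where
  "qform_int m Q x y = (\<Sum>j<m. \<Sum>k<m. bint (x $ j) * bint (Q $$ (j, k)) * bint (y $ k))"

definition lin_int :: "nat \<Rightarrow> bit vec \<Rightarrow> bit vec \<Rightarrow> int" where
  "lin_int m b x = (\<Sum>j<m. bint (b $ j) * bint (x $ j))"

definition ipow :: "int \<Rightarrow> complex" where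
  "ipow e = \<i> ^ nat (e mod 4)"

end

theory Submission
  imports Defs "Jordan_Normal_Form.Matrix_Kernel"
begin

(*
  Write f(x) = x Q x\<^sup>T + 2 b x\<^sup>T, so that S = \<Sum>\<^sub>x i\<^bsup>f(x)\<^esup>, and recall that
  x \<mapsto> i\<^bsup>2 w x\<^sup>T\<^esup> = (-1)\<^bsup>w x\<^sup>T\<^esup> is a character of \<bbbF>\<^sub>2\<^sup>m.
  Modulo 4 we have f(x + y) = f(x) + f(y) + 2 x Q y\<^sup>T, and modulo 2 we have x Q x\<^sup>T = d\<^sub>Q x\<^sup>T
  because Q is symmetric. Substituting y = x + z in S\<^sup>2 = \<Sum>\<^sub>x \<Sum>\<^sub>y i\<^bsup>f(x) + f(y)\<^esup> therefore gives
  S\<^sup>2 = \<Sum>\<^sub>z i\<^bsup>f(z)\<^esup> \<Sum>\<^sub>x (-1)\<^bsup>(d\<^sub>Q + Q z) x\<^sup>T\<^esup> = 2\<^sup>m \<Sum>\<^bsub>Q z = d\<^sub>Q\<^esub> i\<^bsup>f(z)\<^esup>.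

  Summing (-1)\<^bsup>(d\<^sub>Q + Q z) x\<^sup>T\<^esup> over z and x in the other order, and using
  d\<^sub>Q y\<^sup>T = y Q y\<^sup>T = 0 for y in ker Q, shows that Q z = d\<^sub>Q has as many solutions as Q z = 0,
  namely 2\<^bsup>m - r\<^esup>. So a solution z\<^sub>1 exists and the solutions form the coset z\<^sub>1 + ker Q.
  On ker Q the map k \<mapsto> i\<^bsup>f(k)\<^esup> is a character, so its sum is 0 or |ker Q|, which yields the
  dichotomy S = 0 or S\<^sup>2 = i\<^bsup>f(z\<^sub>1)\<^esup> 2\<^sup>m 2\<^bsup>m - r\<^esup>.
*)

section \<open>Counting vectors over finite fields\<close>

lemma card_carrier_vec: "card (carrier_vec n :: 'a vec set) = card (UNIV :: 'a set) ^ n"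
proof -
  let ?h = "\<lambda>v :: 'a vec. restrict (\<lambda>i. v $ i) {..<n}"
  have "bij_betw ?h (carrier_vec n) ({..<n} \<rightarrow>\<^sub>E (UNIV :: 'a set))"
  proof (rule bij_betw_byWitness[where f' = "\<lambda>g. vec n g"])
    show "\<forall>v\<in>carrier_vec n. vec n (?h v) = v"
      by (intro ballI eq_vecI) auto
    show "\<forall>g\<in>{..<n} \<rightarrow>\<^sub>E UNIV. ?h (vec n g) = g"
      using PiE_arb by (fastforce simp: fun_eq_iff)
    show "?h ` carrier_vec n \<subseteq> {..<n} \<rightarrow>\<^sub>E UNIV"
      by (intro image_subsetI) simp
    show "(\<lambda>g. vec n g) ` ({..<n} \<rightarrow>\<^sub>E UNIV) \<subseteq> carrier_vec n"
      by (intro image_subsetI) simp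
  qed
  then show ?thesis
    by (simp add: bij_betw_same_card card_PiE)
qed

lemma (in vectorspace) card_carrier_basis:
  assumes fin: "finite A" and basis: "basis A"
  shows "card (carrier V) = card (carrier K) ^ card A"
proof -
  have A: "A \<subseteq> carrier V"
    using basis by (simp add: basis_def)
  have unique: "\<exists>!a. a \<in> A \<rightarrow>\<^sub>E carrier K \<and> lincomb a A = v" if "v \<in> carrier V" for v
    using basis_criterion[OF fin A] basis that by blast
  have "bij_betw (\<lambda>a. lincomb a A) (A \<rightarrow>\<^sub>E carrier K) (carrier V)"
  proof (rule bij_betwI')
    fix a b assume a: "a \<in> A \<rightarrow>\<^sub>E carrier K" and b: "b \<in> A \<rightarrow>\<^sub>E carrier K"
    then have "lincomb a A \<in> carrier V"
      using A by (intro lincomb_closed) auto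
    then show "(lincomb a A = lincomb b A) = (a = b)"
      using unique a b by metis
  next
    fix a assume "a \<in> A \<rightarrow>\<^sub>E carrier K"
    then show "lincomb a A \<in> carrier V"
      using A by (intro lincomb_closed) auto
  next
    fix v assume "v \<in> carrier V"
    then show "\<exists>a \<in> A \<rightarrow>\<^sub>E carrier K. v = lincomb a A"
      using unique by metis
  qed
  then have "card (carrier V) = card (A \<rightarrow>\<^sub>E carrier K)"
    by (simp add: bij_betw_same_card)
  also have "\<dots> = card (carrier K) ^ card A"
    by (simp add: card_PiE fin)
  finally show ?thesis .
qed

lemma (in vec_space) card_span:
  assumes S: "S \<subseteq> carrier_vec n" and fin: "finite S"
  shows "card (span S) = card (UNIV :: 'a set) ^ vectorspace.dim class_ring (span_vs S)"
proof -
  have vs: "vectorspace class_ring (span_vs S)"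
    using field.field_axioms vectorspace_def submodule_is_module[OF span_is_submodule[OF S]] by metis
  obtain \<beta> where fin_\<beta>: "finite \<beta>" and basis: "vectorspace.basis class_ring (span_vs S) \<beta>"
    using vectorspace.finite_basis_exists[OF vs fin_dim_span[OF fin]] S by auto
  show ?thesis
    using vectorspace.card_carrier_basis[OF vs fin_\<beta> basis] vectorspace.dim_basis[OF vs fin_\<beta> basis]
    by simp
qed

lemma inj_on_add_vec: "inj_on (\<lambda>k. z + k) (carrier_vec n :: 'a :: group_add vec set)"
proof (rule inj_onI)
  fix k l :: "'a vec" assume "k \<in> carrier_vec n" "l \<in> carrier_vec n" "z + k = z + l"
  then show "k = l"
    by (metis eq_vecI carrier_vecD index_add_vec add_left_cancel)
qed

lemma mat_mult_vec_fiber: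
  fixes A :: "'a :: comm_ring_1 mat"
  assumes A: "A \<in> carrier_mat nr nc" and z: "z \<in> carrier_vec nc"
  shows "{x \<in> carrier_vec nc. A *\<^sub>v x = A *\<^sub>v z} = (\<lambda>k. z + k) ` mat_kernel A"
proof (intro equalityI subsetI)
  fix x assume "x \<in> {x \<in> carrier_vec nc. A *\<^sub>v x = A *\<^sub>v z}"
  then have x: "x \<in> carrier_vec nc" and Ax: "A *\<^sub>v x = A *\<^sub>v z" by auto
  have "A *\<^sub>v (x - z) = 0\<^sub>v nr"
    using A x z by (simp add: mult_minus_distrib_mat_vec Ax)
  then have "x - z \<in> mat_kernel A"
    using A x z by (intro mat_kernelI) auto
  moreover have "x = z + (x - z)"
    using x z by (intro eq_vecI) auto
  ultimately show "x \<in> (\<lambda>k. z + k) ` mat_kernel A" by blast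
next
  fix x assume "x \<in> (\<lambda>k. z + k) ` mat_kernel A"
  then obtain k where k: "k \<in> mat_kernel A" and x: "x = z + k" by blast
  have "k \<in> carrier_vec nc" "A *\<^sub>v k = 0\<^sub>v nr"
    using mat_kernelD[OF A k] by auto
  then show "x \<in> {x \<in> carrier_vec nc. A *\<^sub>v x = A *\<^sub>v z}"
    using A z by (simp add: x mult_add_distrib_mat_vec)
qed

lemma card_mat_kernel_mult_power_rank:
  fixes A :: "'a :: field mat"
  assumes A: "A \<in> carrier_mat nr nc" and fin_UNIV: "finite (UNIV :: 'a set)"
  shows "card (mat_kernel A) * card (UNIV :: 'a set) ^ vec_space.rank nr A = card (UNIV :: 'a set) ^ nc"
proof -
  interpret vec_space "TYPE('a)" nr .
  let ?V = "carrier_vec nc :: 'a vec set"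
  let ?im = "(\<lambda>x. A *\<^sub>v x) ` ?V"
  have fin_V: "finite ?V"
    by (intro card_ge_0_finite) (simp add: card_carrier_vec finite_UNIV_card_ge_0 fin_UNIV)
  have "?im = span (set (cols A))"
    using col_space_eq[OF A] A unfolding col_space_def by auto
  moreover have "card (span (set (cols A))) = card (UNIV :: 'a set) ^ rank A"
    unfolding rank_def using A by (intro card_span) (auto simp: cols_def)
  ultimately have card_im: "card ?im = card (UNIV :: 'a set) ^ rank A"
    by simp
  have "card ?V = (\<Sum>w\<in>?im. card {x \<in> ?V. A *\<^sub>v x = w})"
    using sum.group[of ?V ?im "\<lambda>x. A *\<^sub>v x" "\<lambda>_. 1 :: nat"] fin_V by simp
  also have "\<dots> = (\<Sum>w\<in>?im. card (mat_kernel A))"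
  proof (rule sum.cong[OF refl])
    fix w assume "w \<in> ?im"
    then obtain z where z: "z \<in> ?V" and w: "w = A *\<^sub>v z" by blast
    show "card {x \<in> ?V. A *\<^sub>v x = w} = card (mat_kernel A)"
      unfolding w mat_mult_vec_fiber[OF A z]
      by (rule card_image[OF inj_on_subset[OF inj_on_add_vec mat_kernel_carrier[OF A]]])
  qed
  finally show ?thesis
    using card_im card_carrier_vec[where 'a = 'a and n = nc] by simp
qed

section \<open>Finite sums\<close>

lemma sum_if_mem_subset:
  assumes "finite A" and "B \<subseteq> A"
  shows "(\<Sum>x\<in>A. if x \<in> B then f x else 0) = sum f B"
  using sum.inter_restrict[OF assms(1), of f B] assms(2) by (simp add: Int_absorb1)

lemma sum_multiplicative_eq_0_or_card:
  fixes \<chi> :: "'a :: plus \<Rightarrow> 'b :: field"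
  assumes translate: "\<And>k. k \<in> K \<Longrightarrow> bij_betw (\<lambda>l. k + l) K K"
    and mult: "\<And>k l. k \<in> K \<Longrightarrow> l \<in> K \<Longrightarrow> \<chi> (k + l) = \<chi> k * \<chi> l"
  shows "sum \<chi> K = 0 \<or> sum \<chi> K = of_nat (card K)"
proof (cases "sum \<chi> K = 0")
  case nonzero: False
  have "\<chi> k = 1" if k: "k \<in> K" for k
  proof -
    have "sum \<chi> K = (\<Sum>l\<in>K. \<chi> (k + l))"
      using sum.reindex_bij_betw[OF translate[OF k], of \<chi>] by simp
    also have "\<dots> = \<chi> k * sum \<chi> K"
      using k by (simp add: mult sum_distrib_left)
    finally show ?thesis
      using nonzero by simp
  qed
  then show ?thesis
    by simp
qed simp

lemma sum_symmetric_split_diag: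
  fixes a :: "nat \<Rightarrow> nat \<Rightarrow> int"
  assumes "\<And>j k. j < n \<Longrightarrow> k < n \<Longrightarrow> a j k = a k j"
  shows "(\<Sum>j<n. \<Sum>k<n. a j k) = (\<Sum>j<n. a j j) + 2 * (\<Sum>j<n. \<Sum>k<j. a j k)"
  using assms
proof (induction n)
  case (Suc n)
  have IH: "(\<Sum>j<n. \<Sum>k<n. a j k) = (\<Sum>j<n. a j j) + 2 * (\<Sum>j<n. \<Sum>k<j. a j k)"
    using Suc by auto
  have "(\<Sum>j<n. a j n) = (\<Sum>k<n. a n k)"
    using Suc.prems by (intro sum.cong) auto
  then show ?case
    using IH by (simp add: sum.distrib)
qed simp

lemma sum_bilinear_swap:
  fixes F G :: "nat \<Rightarrow> int" and q :: "nat \<Rightarrow> nat \<Rightarrow> int"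
  assumes "\<And>j k. j < n \<Longrightarrow> k < n \<Longrightarrow> q j k = q k j"
  shows "(\<Sum>j<n. \<Sum>k<n. F j * q j k * G k) = (\<Sum>j<n. \<Sum>k<n. G j * q j k * F k)"
proof -
  have "(\<Sum>j<n. \<Sum>k<n. F j * q j k * G k) = (\<Sum>k<n. \<Sum>j<n. F j * q j k * G k)"
    by (rule sum.swap)
  also have "\<dots> = (\<Sum>j<n. \<Sum>k<n. G j * q j k * F k)"
    using assms by (intro sum.cong refl) (simp add: mult.commute mult.left_commute)
  finally show ?thesis .
qed

lemma sum_quadratic_add_mod_4:
  fixes X Y W :: "nat \<Rightarrow> int" and q :: "nat \<Rightarrow> nat \<Rightarrow> int"
  assumes sym: "\<And>j k. j < n \<Longrightarrow> k < n \<Longrightarrow> q j k = q k j"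
  shows "(\<Sum>j<n. \<Sum>k<n. (X j + Y j - 2 * W j) * q j k * (X k + Y k - 2 * W k)) mod 4
    = ((\<Sum>j<n. \<Sum>k<n. X j * q j k * X k) + (\<Sum>j<n. \<Sum>k<n. Y j * q j k * Y k)
       + 2 * (\<Sum>j<n. \<Sum>k<n. X j * q j k * Y k)) mod 4"
proof -
  define A where "A j = X j + Y j" for j
  define B where "B F G = (\<Sum>j<n. \<Sum>k<n. F j * q j k * G k)" for F G
  have expand: "(X j + Y j - 2 * W j) * q j k * (X k + Y k - 2 * W k) =
     X j * q j k * X k + Y j * q j k * Y k + X j * q j k * Y k + Y j * q j k * X k
     + 4 * (W j * q j k * W k) - 2 * (W j * q j k * A k) - 2 * (A j * q j k * W k)" for j k
    by (simp add: A_def algebra_simps)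
  have "(\<Sum>j<n. \<Sum>k<n. (X j + Y j - 2 * W j) * q j k * (X k + Y k - 2 * W k))
     = B X X + B Y Y + B X Y + B Y X + 4 * B W W - 2 * B W A - 2 * B A W"
    unfolding expand B_def by (simp add: sum.distrib sum_subtractf sum_distrib_left)
  also have "\<dots> = B X X + B Y Y + 2 * B X Y + 4 * (B W W - B W A)"
    using sum_bilinear_swap[OF sym, where F = Y and G = X] sum_bilinear_swap[OF sym, where F = A and G = W]
    by (simp add: B_def)
  finally show ?thesis
    unfolding B_def by (simp only: mod_mult_self2)
qed

section \<open>Powers of \<open>i\<close>\<close>

lemma ipow_eq_power_int: "ipow e = \<i> powi e"
proof -
  have e: "e = 4 * (e div 4) + e mod 4" by simp
  have "\<i> powi e = \<i> powi (4 * (e div 4)) * \<i> powi (e mod 4)"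
    by (subst e, rule power_int_add) auto
  also have "\<i> powi (4 * (e div 4)) = 1"
    by (simp add: power_int_mult)
  also have "\<i> powi (e mod 4) = \<i> ^ nat (e mod 4)"
    by (simp add: power_int_def)
  finally show ?thesis by (simp add: ipow_def)
qed

lemma ipow_add: "ipow (a + b) = ipow a * ipow b"
  by (simp add: ipow_eq_power_int power_int_add)

lemma ipow_mod_4_cong: "a mod 4 = b mod 4 \<Longrightarrow> ipow a = ipow b"
  by (simp add: ipow_def)

lemma ipow_double_mod_2_cong: "a mod 2 = b mod 2 \<Longrightarrow> ipow (2 * a) = ipow (2 * b)"
  by (rule ipow_mod_4_cong) presburger

lemma ipow_0 [simp]: "ipow 0 = 1"
  by (simp add: ipow_def)

lemma ipow_2: "ipow 2 = -1"
  by (simp add: ipow_def)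

lemma ipow_4_mult: "ipow (4 * a) = 1"
  by (simp add: ipow_def)

section \<open>Binary vectors\<close>

lemma UNIV_bit: "(UNIV :: bit set) = {0, 1}"
  by (auto intro: bit.exhaust)

lemma finite_UNIV_bit: "finite (UNIV :: bit set)"
  by (simp add: UNIV_bit)

lemma card_UNIV_bit [simp]: "card (UNIV :: bit set) = 2"
  by (simp add: UNIV_bit)

lemma finite_carrier_vec_bit [simp]: "finite (carrier_vec n :: bit vec set)"
  by (intro card_ge_0_finite) (simp add: card_carrier_vec)

lemma bit_add_self: "(a :: bit) + a = 0"
  by (cases a) (simp_all del: add_bit_eq_xor)

lemma vec_add_self_bit: "(x :: bit vec) \<in> carrier_vec n \<Longrightarrow> x + x = 0\<^sub>v n"
  by (intro eq_vecI) (auto simp del: add_bit_eq_xor simp: bit_add_self)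

lemma vec_add_add_cancel_bit: "(x :: bit vec) \<in> carrier_vec n \<Longrightarrow> z \<in> carrier_vec n \<Longrightarrow> x + (x + z) = z"
  by (simp flip: assoc_add_vec add: vec_add_self_bit)

lemma vec_add_eq_0_iff_bit:
  assumes "(u :: bit vec) \<in> carrier_vec n" and "v \<in> carrier_vec n"
  shows "u + v = 0\<^sub>v n \<longleftrightarrow> u = v"
  using vec_add_add_cancel_bit[OF assms(1,2)] vec_add_self_bit[OF assms(1)] assms by auto

lemma bij_betw_vec_add_bit: "(x :: bit vec) \<in> carrier_vec n \<Longrightarrow> bij_betw (\<lambda>z. x + z) (carrier_vec n) (carrier_vec n)"
  by (rule bij_betw_byWitness[of _ "\<lambda>z. x + z"]) (auto simp: vec_add_add_cancel_bit)

lemma bint_0 [simp]: "bint 0 = 0" and bint_1 [simp]: "bint 1 = 1"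
  by (auto simp: bint_def)

lemma bint_add: "bint (a + b) = bint a + bint b - 2 * bint a * bint b"
  by (cases a; cases b) (auto simp: bint_def)

lemma bint_mult: "bint (a * b) = bint a * bint b"
  by (cases a; cases b) (auto simp: bint_def)

lemma bint_mult_self: "bint a * c * bint a = c * bint a"
  by (cases a) (auto simp: bint_def)

lemma bint_sum_mod_2: "finite A \<Longrightarrow> bint (sum g A) mod 2 = (\<Sum>k\<in>A. bint (g k)) mod 2"
proof (induction A rule: finite_induct)
  case (insert x F)
  have "bint (sum g (insert x F)) = bint (g x) + bint (sum g F) - 2 * (bint (g x) * bint (sum g F))"
    using insert by (simp del: add_bit_eq_xor add: bint_add)
  then have "bint (sum g (insert x F)) mod 2 = (bint (g x) + bint (sum g F)) mod 2"
    by presburger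
  also have "\<dots> = (bint (g x) + (\<Sum>k\<in>F. bint (g k))) mod 2"
    by (rule mod_add_cong[OF refl insert.IH])
  finally show ?case using insert by simp
qed simp

lemma lin_int_commute: "lin_int m u x = lin_int m x u"
  unfolding lin_int_def by (simp add: mult.commute)

lemma lin_int_zero [simp]: "lin_int m (0\<^sub>v m) x = 0"
  by (simp add: lin_int_def)

lemma lin_int_add_mod_2:
  assumes "u \<in> carrier_vec m" and "v \<in> carrier_vec m"
  shows "lin_int m (u + v) x mod 2 = (lin_int m u x + lin_int m v x) mod 2"
proof -
  have "lin_int m (u + v) x = lin_int m u x + lin_int m v x
      - 2 * (\<Sum>j<m. bint (u $ j) * bint (v $ j) * bint (x $ j))"
    unfolding lin_int_def using assms
    by (simp del: add_bit_eq_xor add: bint_add sum.distrib sum_subtractf sum_distrib_left algebra_simps)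
  then show ?thesis by presburger
qed

lemma ipow_double_lin_int_add_left:
  assumes "u \<in> carrier_vec m" and "v \<in> carrier_vec m"
  shows "ipow (2 * lin_int m (u + v) x) = ipow (2 * lin_int m u x) * ipow (2 * lin_int m v x)"
  using ipow_double_mod_2_cong[OF lin_int_add_mod_2[OF assms]] by (simp add: distrib_left ipow_add)

lemma ipow_double_lin_int_add_right:
  assumes "x \<in> carrier_vec m" and "y \<in> carrier_vec m"
  shows "ipow (2 * lin_int m u (x + y)) = ipow (2 * lin_int m u x) * ipow (2 * lin_int m u y)"
  using ipow_double_lin_int_add_left[OF assms] by (simp add: lin_int_commute)

lemma sum_ipow_double_lin_int:
  assumes w: "w \<in> carrier_vec m"
  shows "(\<Sum>x\<in>carrier_vec m. ipow (2 * lin_int m w x)) = (if w = 0\<^sub>v m then 2 ^ m else 0)"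
proof (cases "w = 0\<^sub>v m")
  case True
  then show ?thesis by (simp add: card_carrier_vec)
next
  case False
  then obtain j where j: "j < m" "w $ j = 1" using w
    by (metis bit_not_zero_iff carrier_vecD eq_vecI index_zero_vec(1) index_zero_vec(2))
  let ?e = "unit_vec m j :: bit vec"
  let ?g = "\<lambda>x. ipow (2 * lin_int m w x)"
  have "lin_int m w ?e = 1"
    unfolding lin_int_def using j by (simp add: unit_vec_def sum.delta' if_distrib cong: if_cong)
  then have flip: "?g (?e + x) = - ?g x" if "x \<in> carrier_vec m" for x
    using ipow_double_lin_int_add_right[of ?e m x w] that by (simp add: ipow_2)
  have "sum ?g (carrier_vec m) = (\<Sum>x\<in>carrier_vec m. ?g (?e + x))"
    using sum.reindex_bij_betw[OF bij_betw_vec_add_bit[of ?e m], of ?g] by simp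
  also have "\<dots> = - sum ?g (carrier_vec m)"
    by (simp add: flip sum_negf)
  finally show ?thesis using False by simp
qed

section \<open>Symmetric binary matrices\<close>

locale symmetric_bit_matrix =
  fixes m :: nat and Q :: "bit mat"
  assumes carrier: "Q \<in> carrier_mat m m" and symmetric: "transpose_mat Q = Q"
begin

lemma bint_entry_symmetric: "j < m \<Longrightarrow> k < m \<Longrightarrow> bint (Q $$ (j, k)) = bint (Q $$ (k, j))"
  by (metis symmetric carrier carrier_matD index_transpose_mat(1))

lemma qform_int_commute: "qform_int m Q x y = qform_int m Q y x"
  unfolding qform_int_def by (rule sum_bilinear_swap[OF bint_entry_symmetric])

lemma qform_int_add_mod_4:
  assumes x: "x \<in> carrier_vec m" and y: "y \<in> carrier_vec m"
  shows "qform_int m Q (x + y) (x + y) mod 4 =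
         (qform_int m Q x x + qform_int m Q y y + 2 * qform_int m Q x y) mod 4"
proof -
  have "bint ((x + y) $ j) = bint (x $ j) + bint (y $ j) - 2 * (bint (x $ j) * bint (y $ j))" if "j < m" for j
    using that x y by (simp del: add_bit_eq_xor add: bint_add)
  then have expand: "qform_int m Q (x + y) (x + y) =
     (\<Sum>j<m. \<Sum>k<m. (bint (x $ j) + bint (y $ j) - 2 * (bint (x $ j) * bint (y $ j))) * bint (Q $$ (j, k))
       * (bint (x $ k) + bint (y $ k) - 2 * (bint (x $ k) * bint (y $ k))))"
    unfolding qform_int_def by (intro sum.cong refl) (simp add: mult.assoc)
  show ?thesis
    unfolding expand
    using sum_quadratic_add_mod_4[OF bint_entry_symmetric, where X = "\<lambda>j. bint (x $ j)"
          and Y = "\<lambda>j. bint (y $ j)" and W = "\<lambda>j. bint (x $ j) * bint (y $ j)"]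
    by (simp only: qform_int_def)
qed

lemma mult_mat_vec_index: "z \<in> carrier_vec m \<Longrightarrow> j < m \<Longrightarrow> (Q *\<^sub>v z) $ j = (\<Sum>k<m. Q $$ (j, k) * z $ k)"
  using carrier by (auto simp: mult_mat_vec_def scalar_prod_def row_def lessThan_atLeast0 intro!: sum.cong)

lemma qform_int_mod_2:
  assumes x: "x \<in> carrier_vec m" and z: "z \<in> carrier_vec m"
  shows "qform_int m Q x z mod 2 = lin_int m (Q *\<^sub>v z) x mod 2"
proof -
  have entry: "bint (x $ j) * (\<Sum>k<m. bint (Q $$ (j, k)) * bint (z $ k)) mod 2
      = bint (x $ j) * bint ((Q *\<^sub>v z) $ j) mod 2" if j: "j < m" for j
  proof -
    have "bint ((Q *\<^sub>v z) $ j) mod 2 = (\<Sum>k<m. bint (Q $$ (j, k) * z $ k)) mod 2"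
      unfolding mult_mat_vec_index[OF z j] by (rule bint_sum_mod_2) simp
    then have "bint ((Q *\<^sub>v z) $ j) mod 2 = (\<Sum>k<m. bint (Q $$ (j, k)) * bint (z $ k)) mod 2"
      by (simp only: bint_mult)
    then show ?thesis
      by (rule mod_mult_cong[OF refl, symmetric])
  qed
  have "qform_int m Q x z mod 2 = (\<Sum>j<m. bint (x $ j) * (\<Sum>k<m. bint (Q $$ (j, k)) * bint (z $ k)) mod 2) mod 2"
    unfolding qform_int_def mod_sum_eq by (simp add: sum_distrib_left mult.assoc)
  also have "\<dots> = (\<Sum>j<m. bint (x $ j) * bint ((Q *\<^sub>v z) $ j) mod 2) mod 2"
    by (rule arg_cong[where f = "\<lambda>s. s mod 2"], rule sum.cong[OF refl], rule entry) simp
  also have "\<dots> = lin_int m (Q *\<^sub>v z) x mod 2"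
    unfolding lin_int_def mod_sum_eq by (simp add: mult.commute)
  finally show ?thesis .
qed

lemma qform_int_diag_mod_2:
  assumes x: "x \<in> carrier_vec m"
  shows "qform_int m Q x x mod 2 = lin_int m (diag_vec Q) x mod 2"
proof -
  have "qform_int m Q x x = (\<Sum>j<m. bint (x $ j) * bint (Q $$ (j, j)) * bint (x $ j))
     + 2 * (\<Sum>j<m. \<Sum>k<j. bint (x $ j) * bint (Q $$ (j, k)) * bint (x $ k))"
    unfolding qform_int_def
    by (rule sum_symmetric_split_diag) (simp add: bint_entry_symmetric mult.commute mult.left_commute)
  moreover have "(\<Sum>j<m. bint (x $ j) * bint (Q $$ (j, j)) * bint (x $ j)) = lin_int m (diag_vec Q) x"
    unfolding lin_int_def diag_vec_def using carrier
    by (intro sum.cong refl) (auto simp: bint_mult_self)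
  ultimately show ?thesis
    by simp
qed

lemma diag_vec_carrier: "diag_vec Q \<in> carrier_vec m"
  using carrier by (simp add: diag_vec_def)

lemma mult_mat_vec_carrier: "z \<in> carrier_vec m \<Longrightarrow> Q *\<^sub>v z \<in> carrier_vec m"
  using carrier by simp

lemma ipow_double_qform_int:
  assumes "x \<in> carrier_vec m" and "z \<in> carrier_vec m"
  shows "ipow (2 * qform_int m Q x z) = ipow (2 * lin_int m (Q *\<^sub>v z) x)"
  using assms by (intro ipow_double_mod_2_cong qform_int_mod_2)

lemma lin_int_mult_mat_vec_commute_mod_2:
  assumes "y \<in> carrier_vec m" and "z \<in> carrier_vec m"
  shows "lin_int m (Q *\<^sub>v z) y mod 2 = lin_int m (Q *\<^sub>v y) z mod 2"
  using qform_int_mod_2[OF assms] qform_int_mod_2[OF assms(2,1)] qform_int_commute by simp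

lemma lin_int_diag_vec_kernel_mod_2:
  assumes "y \<in> mat_kernel Q"
  shows "lin_int m (diag_vec Q) y mod 2 = 0"
proof -
  have y: "y \<in> carrier_vec m" and Qy: "Q *\<^sub>v y = 0\<^sub>v m"
    using mat_kernelD[OF carrier assms] by auto
  have "lin_int m (diag_vec Q) y mod 2 = qform_int m Q y y mod 2"
    using qform_int_diag_mod_2[OF y] by simp
  also have "\<dots> = lin_int m (Q *\<^sub>v y) y mod 2"
    by (rule qform_int_mod_2[OF y y])
  finally show ?thesis
    using Qy by simp
qed

lemma ipow_double_qform_int_kernel:
  assumes "x \<in> carrier_vec m" and k: "k \<in> mat_kernel Q"
  shows "ipow (2 * qform_int m Q x k) = 1"
  using ipow_double_qform_int[OF assms(1)] mat_kernelD[OF carrier k] by simp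

lemma bij_betw_add_kernel:
  assumes k: "k \<in> mat_kernel Q"
  shows "bij_betw (\<lambda>l. k + l) (mat_kernel Q) (mat_kernel Q)"
proof (rule bij_betw_byWitness[of _ "\<lambda>l. k + l"])
  have kV: "k \<in> carrier_vec m" and Qk: "Q *\<^sub>v k = 0\<^sub>v m"
    using mat_kernelD[OF carrier k] by auto
  show "\<forall>l\<in>mat_kernel Q. k + (k + l) = l" "\<forall>l\<in>mat_kernel Q. k + (k + l) = l"
    using mat_kernel_carrier[OF carrier] kV by (auto simp: vec_add_add_cancel_bit)
  show "(\<lambda>l. k + l) ` mat_kernel Q \<subseteq> mat_kernel Q" "(\<lambda>l. k + l) ` mat_kernel Q \<subseteq> mat_kernel Q"
    using carrier kV Qk by (auto simp: mat_kernel_def mult_add_distrib_mat_vec)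
qed

definition phase :: "bit vec \<Rightarrow> bit vec \<Rightarrow> int" where
  "phase b x = qform_int m Q x x + 2 * lin_int m b x"

lemma ipow_phase_add:
  assumes x: "x \<in> carrier_vec m" and y: "y \<in> carrier_vec m"
  shows "ipow (phase b (x + y)) = ipow (phase b x) * ipow (phase b y) * ipow (2 * qform_int m Q x y)"
proof -
  have "ipow (qform_int m Q (x + y) (x + y))
      = ipow (qform_int m Q x x) * ipow (qform_int m Q y y) * ipow (2 * qform_int m Q x y)"
    using ipow_mod_4_cong[OF qform_int_add_mod_4[OF x y]] by (simp add: ipow_add)
  then show ?thesis
    unfolding phase_def ipow_add ipow_double_lin_int_add_right[OF x y] by (simp add: mult_ac)
qed

lemma ipow_phase_translate:
  assumes x: "x \<in> carrier_vec m" and z: "z \<in> carrier_vec m"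
  shows "ipow (phase b x) * ipow (phase b (x + z))
    = ipow (phase b z) * ipow (2 * lin_int m (diag_vec Q + Q *\<^sub>v z) x)"
proof -
  have "ipow (phase b x) * ipow (phase b x) = ipow (2 * qform_int m Q x x + 4 * lin_int m b x)"
    unfolding phase_def ipow_add[symmetric] by (simp add: algebra_simps)
  also have "\<dots> = ipow (2 * lin_int m (diag_vec Q) x)"
    unfolding ipow_add ipow_4_mult using ipow_double_mod_2_cong[OF qform_int_diag_mod_2[OF x]] by simp
  finally have square: "ipow (phase b x) * ipow (phase b x) = ipow (2 * lin_int m (diag_vec Q) x)" .
  show ?thesis
    unfolding ipow_phase_add[OF x z] ipow_double_qform_int[OF x z]
      ipow_double_lin_int_add_left[OF diag_vec_carrier mult_mat_vec_carrier[OF z]] square[symmetric]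
    by (simp add: mult_ac)
qed

definition diag_solutions :: "bit vec set" where
  "diag_solutions = {z \<in> carrier_vec m. Q *\<^sub>v z = diag_vec Q}"

lemma sum_ipow_double_lin_int_diag:
  assumes z: "z \<in> carrier_vec m"
  shows "(\<Sum>x\<in>carrier_vec m. ipow (2 * lin_int m (diag_vec Q + Q *\<^sub>v z) x))
    = (if z \<in> diag_solutions then 2 ^ m else 0)"
  using sum_ipow_double_lin_int[of "diag_vec Q + Q *\<^sub>v z"] z
    vec_add_eq_0_iff_bit[OF diag_vec_carrier mult_mat_vec_carrier[OF z]] diag_vec_carrier
  by (auto simp: diag_solutions_def mult_mat_vec_carrier)

lemma gauss_sum_square:
  "(\<Sum>x\<in>carrier_vec m. ipow (phase b x)) ^ 2 = 2 ^ m * (\<Sum>z\<in>diag_solutions. ipow (phase b z))"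
proof -
  let ?V = "carrier_vec m :: bit vec set"
  have "(\<Sum>x\<in>?V. ipow (phase b x)) ^ 2 = (\<Sum>x\<in>?V. \<Sum>y\<in>?V. ipow (phase b x) * ipow (phase b y))"
    by (simp add: power2_eq_square sum_product)
  also have "\<dots> = (\<Sum>x\<in>?V. \<Sum>z\<in>?V. ipow (phase b x) * ipow (phase b (x + z)))"
  proof (rule sum.cong[OF refl])
    fix x assume x: "x \<in> ?V"
    show "(\<Sum>y\<in>?V. ipow (phase b x) * ipow (phase b y)) = (\<Sum>z\<in>?V. ipow (phase b x) * ipow (phase b (x + z)))"
      using sum.reindex_bij_betw[OF bij_betw_vec_add_bit[OF x], of "\<lambda>y. ipow (phase b x) * ipow (phase b y)"]
      by simp
  qed
  also have "\<dots> = (\<Sum>z\<in>?V. ipow (phase b z) * (\<Sum>x\<in>?V. ipow (2 * lin_int m (diag_vec Q + Q *\<^sub>v z) x)))"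
    by (simp add: ipow_phase_translate sum_distrib_left cong: sum.cong) (rule sum.swap)
  also have "\<dots> = (\<Sum>z\<in>?V. if z \<in> diag_solutions then 2 ^ m * ipow (phase b z) else 0)"
    by (intro sum.cong refl) (simp add: sum_ipow_double_lin_int_diag)
  also have "\<dots> = (\<Sum>z\<in>diag_solutions. 2 ^ m * ipow (phase b z))"
    by (rule sum_if_mem_subset) (auto simp: diag_solutions_def)
  also have "\<dots> = 2 ^ m * (\<Sum>z\<in>diag_solutions. ipow (phase b z))"
    by (simp add: sum_distrib_left)
  finally show ?thesis .
qed

lemma card_diag_solutions: "card diag_solutions = card (mat_kernel Q)"
proof -
  let ?V = "carrier_vec m :: bit vec set"
  let ?\<chi> = "\<lambda>z y. ipow (2 * lin_int m (diag_vec Q + Q *\<^sub>v z) y)"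
  have "(\<Sum>z\<in>?V. \<Sum>y\<in>?V. ?\<chi> z y) = (\<Sum>z\<in>?V. if z \<in> diag_solutions then 2 ^ m else 0)"
    by (intro sum.cong refl) (simp add: sum_ipow_double_lin_int_diag)
  also have "\<dots> = of_nat (card diag_solutions) * 2 ^ m"
    by (subst sum_if_mem_subset) (auto simp: diag_solutions_def)
  finally have by_solutions: "(\<Sum>z\<in>?V. \<Sum>y\<in>?V. ?\<chi> z y) = of_nat (card diag_solutions) * 2 ^ m" .
  have factor: "?\<chi> z y = ipow (2 * lin_int m (diag_vec Q) y) * ipow (2 * lin_int m (Q *\<^sub>v y) z)"
    if z: "z \<in> ?V" and y: "y \<in> ?V" for z y
    using ipow_double_lin_int_add_left[OF diag_vec_carrier mult_mat_vec_carrier[OF z]]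
      ipow_double_mod_2_cong[OF lin_int_mult_mat_vec_commute_mod_2[OF y z]] by simp
  have inner: "ipow (2 * lin_int m (diag_vec Q) y) * (\<Sum>z\<in>?V. ipow (2 * lin_int m (Q *\<^sub>v y) z))
      = (if y \<in> mat_kernel Q then 2 ^ m else 0)" if y: "y \<in> ?V" for y
  proof (cases "y \<in> mat_kernel Q")
    case True
    then have "ipow (2 * lin_int m (diag_vec Q) y) = 1"
      using ipow_double_mod_2_cong[of _ 0] lin_int_diag_vec_kernel_mod_2 by simp
    then show ?thesis
      using True sum_ipow_double_lin_int[OF mult_mat_vec_carrier[OF y]] mat_kernelD[OF carrier True] by simp
  next
    case False
    then have "Q *\<^sub>v y \<noteq> 0\<^sub>v m"
      using y by (auto intro: mat_kernelI[OF carrier])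
    then show ?thesis
      using False sum_ipow_double_lin_int[OF mult_mat_vec_carrier[OF y]] by simp
  qed
  have "(\<Sum>z\<in>?V. \<Sum>y\<in>?V. ?\<chi> z y) = (\<Sum>y\<in>?V. \<Sum>z\<in>?V. ?\<chi> z y)"
    by (rule sum.swap)
  also have "\<dots> = (\<Sum>y\<in>?V. if y \<in> mat_kernel Q then 2 ^ m else 0)"
    by (intro sum.cong refl) (simp add: factor inner flip: sum_distrib_left)
  also have "\<dots> = of_nat (card (mat_kernel Q)) * 2 ^ m"
    by (subst sum_if_mem_subset) (auto simp: mat_kernel_carrier[OF carrier])
  finally show ?thesis
    using by_solutions by simp
qed

lemma diag_solutions_translate:
  assumes z1: "z1 \<in> diag_solutions"
  shows "diag_solutions = (\<lambda>k. z1 + k) ` mat_kernel Q" and "inj_on (\<lambda>k. z1 + k) (mat_kernel Q)"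
proof -
  have z1V: "z1 \<in> carrier_vec m" and Qz1: "Q *\<^sub>v z1 = diag_vec Q"
    using z1 by (auto simp: diag_solutions_def)
  show "diag_solutions = (\<lambda>k. z1 + k) ` mat_kernel Q"
    unfolding diag_solutions_def Qz1[symmetric] by (rule mat_mult_vec_fiber[OF carrier z1V])
  show "inj_on (\<lambda>k. z1 + k) (mat_kernel Q)"
    by (rule inj_on_subset[OF inj_on_add_vec mat_kernel_carrier[OF carrier]])
qed

lemma sum_phase_diag_solutions:
  assumes z1: "z1 \<in> diag_solutions"
  shows "(\<Sum>z\<in>diag_solutions. ipow (phase b z)) = ipow (phase b z1) * (\<Sum>k\<in>mat_kernel Q. ipow (phase b k))"
proof -
  have z1V: "z1 \<in> carrier_vec m"
    using z1 by (simp add: diag_solutions_def)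
  have "(\<Sum>z\<in>diag_solutions. ipow (phase b z)) = (\<Sum>k\<in>mat_kernel Q. ipow (phase b (z1 + k)))"
    unfolding diag_solutions_translate(1)[OF z1] by (rule sum.reindex[OF diag_solutions_translate(2)[OF z1], unfolded comp_def])
  also have "\<dots> = (\<Sum>k\<in>mat_kernel Q. ipow (phase b z1) * ipow (phase b k))"
    using mat_kernel_carrier[OF carrier] z1V
    by (intro sum.cong refl) (simp add: ipow_phase_add ipow_double_qform_int_kernel subset_iff)
  finally show ?thesis
    by (simp add: sum_distrib_left)
qed

lemma sum_phase_kernel:
  "(\<Sum>k\<in>mat_kernel Q. ipow (phase b k)) = 0 \<or> (\<Sum>k\<in>mat_kernel Q. ipow (phase b k)) = 2 ^ (m - vec_space.rank m Q)"
proof -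
  have "(\<Sum>k\<in>mat_kernel Q. ipow (phase b k)) = 0 \<or> (\<Sum>k\<in>mat_kernel Q. ipow (phase b k)) = of_nat (card (mat_kernel Q))"
    using mat_kernel_carrier[OF carrier]
    by (intro sum_multiplicative_eq_0_or_card bij_betw_add_kernel)
      (auto simp: ipow_phase_add ipow_double_qform_int_kernel subset_iff)
  moreover have "card (mat_kernel Q) = 2 ^ (m - vec_space.rank m Q)"
  proof -
    have "m = (m - vec_space.rank m Q) + vec_space.rank m Q"
      using vec_space.rank_le_nc[OF carrier] by simp
    then have "card (mat_kernel Q) * 2 ^ vec_space.rank m Q = 2 ^ (m - vec_space.rank m Q) * 2 ^ vec_space.rank m Q"
      using card_mat_kernel_mult_power_rank[OF carrier finite_UNIV_bit] by (metis card_UNIV_bit power_add)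
    then show ?thesis
      by simp
  qed
  ultimately show ?thesis
    by simp
qed

lemma diag_solutions_nonempty: "diag_solutions \<noteq> {}"
proof -
  have "0\<^sub>v m \<in> mat_kernel Q"
    using carrier by (intro mat_kernelI) auto
  then have "card (mat_kernel Q) > 0"
    using finite_subset[OF mat_kernel_carrier[OF carrier]] by (auto simp: card_gt_0_iff)
  then show ?thesis
    using card_diag_solutions by auto
qed

end

theorem propositionA2:
  fixes m r :: nat and Q :: "bit mat" and b :: "bit vec"
  assumes "Q \<in> carrier_mat m m"
    and "transpose_mat Q = Q"
    and "rank2 m Q = r"
    and "b \<in> carrier_vec m"
  defines "S \<equiv> (\<Sum>x\<in>carrier_vec m. ipow (qform_int m Q x x + 2 * lin_int m b x))"
  shows "\<exists>z1 \<in> carrier_vec m. transpose_mat Q *\<^sub>v z1 = diag_vec Q \<and>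
           (S = 0 \<or> S ^ 2 = ipow (qform_int m Q z1 z1 + 2 * lin_int m b z1) * 2 ^ (2 * m - r))"
proof -
  interpret symmetric_bit_matrix m Q
    using assms(1,2) by unfold_locales
  obtain z1 where z1: "z1 \<in> diag_solutions"
    using diag_solutions_nonempty by blast
  let ?T = "\<Sum>k\<in>mat_kernel Q. ipow (phase b k)"
  have "S ^ 2 = 2 ^ m * (ipow (phase b z1) * ?T)"
    unfolding S_def phase_def[symmetric] gauss_sum_square sum_phase_diag_solutions[OF z1] ..
  moreover have "?T = 0 \<or> ?T = 2 ^ (m - r)"
    using sum_phase_kernel[of b] assms(3) by (simp add: rank2_def)
  moreover have "m + (m - r) = 2 * m - r"
    using vec_space.rank_le_nc[OF assms(1)] assms(3) by (simp add: rank2_def)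
  ultimately have "S = 0 \<or> S ^ 2 = ipow (phase b z1) * 2 ^ (2 * m - r)"
    by (auto simp flip: power_add simp: mult_ac)
  then show ?thesis
    using z1 symmetric by (auto simp: diag_solutions_def phase_def)
qed

end
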